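(* Let $(\sigma_1,\dots,\sigma_n)$ and $(\sigma'_1,\dots,\sigma'_n)$ be nonnegative vectors and $\mu_1,\dots,\mu_n\in\mathbb R$. Let $X_1,\dots,X_n$ be independent with $X_i\sim\mathcal N(\mu_i,\sigma_i^2)$ and $Y_1,\dots,Y_n$ be independent with $Y_i\sim\mathcal N(\mu_i,\sigma_i'^2)$. Then $$\Bigl|\mathbb{E}\max_{i\in[n]}X_i-\mathbb{E}\max_{i\in[n]}Y_i\Bigr|\le C\sum_{i\in[n]}|\sigma_i-\sigma_i'|$$ for an absolute constant $C$. *)

theory Defs
  imports "HOL-Probability.Probability"
begin

definition gaussian :: "real \<Rightarrow> real \<Rightarrow> real measure" where
  "gaussian \<mu> \<sigma> =
     (if \<sigma> = 0 then return borel \<mu> else density lborel (normal_density \<mu> \<sigma>))"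

end

theory Submission
  imports Defs
begin

text \<open>Realise both Gaussian vectors on one probability space as \<open>\<mu>\<^sub>i + \<sigma>\<^sub>i Z\<^sub>i\<close> and
  \<open>\<mu>\<^sub>i + \<sigma>'\<^sub>i Z\<^sub>i\<close> with \<open>Z\<close> a standard Gaussian vector; this is legitimate because, for
  independent coordinates, the expected maximum depends only on the marginal laws.
  Since \<open>|max a - max b| \<le> \<Sum>\<^sub>i |a\<^sub>i - b\<^sub>i|\<close>, the two expected maxima differ by at most
  \<open>\<Sum>\<^sub>i |\<sigma>\<^sub>i - \<sigma>'\<^sub>i| E|Z\<^sub>i| = sqrt (2/\<pi>) \<Sum>\<^sub>i |\<sigma>\<^sub>i - \<sigma>'\<^sub>i|\<close>, so \<open>C = sqrt (2/\<pi>)\<close> works.\<close>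

lemma Max_image_diff_le_sum_abs_diff:
  fixes a b :: "'i \<Rightarrow> 'a::linordered_idom"
  assumes "finite I" "I \<noteq> {}"
  shows "\<bar>Max (a ` I) - Max (b ` I)\<bar> \<le> (\<Sum>i\<in>I. \<bar>a i - b i\<bar>)"
proof -
  have "Max (f ` I) - Max (g ` I) \<le> (\<Sum>i\<in>I. \<bar>f i - g i\<bar>)" for f g :: "'i \<Rightarrow> 'a"
  proof -
    have "Max (f ` I) \<in> f ` I"
      using assms by simp
    then obtain j where j: "j \<in> I" "Max (f ` I) = f j"
      by auto
    have "g j \<le> Max (g ` I)" using assms j by simp
    moreover have "\<bar>f j - g j\<bar> \<le> (\<Sum>i\<in>I. \<bar>f i - g i\<bar>)"
      using assms j by (intro member_le_sum) auto
    ultimately show ?thesis using j by linarith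
  qed
  from this[of a b] this[of b a] show ?thesis
    by (simp add: abs_minus_commute)
qed

lemma indep_vars_PiM_components:
  assumes "I \<noteq> {}" and M: "\<And>i. i \<in> I \<Longrightarrow> prob_space (M i)"
  shows "prob_space.indep_vars (PiM I M) M (\<lambda>i \<omega>. \<omega> i) I"
proof -
  interpret prob_space "PiM I M" by (rule prob_space_PiM) (rule M)
  have "distr (PiM I M) (PiM I M) (\<lambda>\<omega>. \<lambda>i\<in>I. \<omega> i) = distr (PiM I M) (PiM I M) (\<lambda>\<omega>. \<omega>)"
    by (intro distr_cong) (auto simp: space_PiM)
  also have "\<dots> = PiM I (\<lambda>i. distr (PiM I M) (M i) (\<lambda>\<omega>. \<omega> i))"
    by (auto intro!: PiM_cong simp: distr_PiM_component M)
  finally show ?thesis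
    by (subst indep_vars_iff_distr_eq_PiM'[OF assms(1)]) auto
qed

lemma (in prob_space) integral_indep_vars_PiM:
  fixes f :: "('i \<Rightarrow> 'b) \<Rightarrow> 'c::{banach, second_countable_topology}"
  assumes "indep_vars M' X I" "I \<noteq> {}" "f \<in> borel_measurable (PiM I M')"
  shows "(\<integral>\<omega>. f (\<lambda>i\<in>I. X i \<omega>) \<partial>M) = (\<integral>x. f x \<partial>PiM I (\<lambda>i. distr M (M' i) (X i)))"
proof -
  have rv: "\<And>i. i \<in> I \<Longrightarrow> random_variable (M' i) (X i)"
    using assms(1) by (auto simp: indep_vars_def)
  then have "PiM I (\<lambda>i. distr M (M' i) (X i)) = distr M (PiM I M') (\<lambda>\<omega>. \<lambda>i\<in>I. X i \<omega>)"
    using indep_vars_iff_distr_eq_PiM'[OF assms(2) rv] assms(1) by simp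
  then show ?thesis
    using assms(3) rv by (simp add: integral_distr measurable_restrict)
qed

lemma
  fixes g :: "'a \<Rightarrow> 'b::{banach, second_countable_topology}"
  assumes "\<And>i. i \<in> I \<Longrightarrow> prob_space (M i)" "i \<in> I" "g \<in> borel_measurable (M i)"
  shows integrable_PiM_component_iff: "integrable (PiM I M) (\<lambda>z. g (z i)) \<longleftrightarrow> integrable (M i) g"
    and integral_PiM_component: "(\<integral>z. g (z i) \<partial>PiM I M) = (\<integral>x. g x \<partial>M i)"
proof -
  have [measurable]: "(\<lambda>z. z i) \<in> measurable (PiM I M) (M i)"
    using assms(2) by measurable
  show "integrable (PiM I M) (\<lambda>z. g (z i)) \<longleftrightarrow> integrable (M i) g"
    using integrable_distr_eq[of "\<lambda>z. z i" "PiM I M" "M i" g] assms by (simp add: distr_PiM_component)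
  show "(\<integral>z. g (z i) \<partial>PiM I M) = (\<integral>x. g x \<partial>M i)"
    using integral_distr[of "\<lambda>z. z i" "PiM I M" "M i" g] assms by (simp add: distr_PiM_component)
qed

lemma sets_gaussian [measurable_cong, simp]: "sets (gaussian \<mu> \<sigma>) = sets borel"
  by (simp add: gaussian_def)

lemma prob_space_gaussian: "0 \<le> \<sigma> \<Longrightarrow> prob_space (gaussian \<mu> \<sigma>)"
  by (simp add: gaussian_def prob_space_return prob_space_normal_density)

lemma distr_std_gaussian_affine:
  assumes "0 \<le> \<sigma>"
  shows "distr (gaussian 0 1) borel (\<lambda>x. \<mu> + \<sigma> * x) = gaussian \<mu> \<sigma>"
proof (cases "\<sigma> = 0")
  case True
  have "distr (gaussian 0 1) borel (\<lambda>x. \<mu>) = return borel \<mu>"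
    by (simp add: prob_space.distr_const prob_space_gaussian)
  with True show ?thesis
    by (simp add: gaussian_def)
next
  case False
  with assms have "\<sigma> > 0" by simp
  have "distributed (gaussian 0 1) lborel (\<lambda>x. x) std_normal_density"
    by (auto simp: distributed_def gaussian_def distr_id2)
  from prob_space.normal_density_affine[OF prob_space_gaussian this _ \<open>\<sigma> \<noteq> 0\<close>, of \<mu>]
  have "distr (gaussian 0 1) lborel (\<lambda>x. \<mu> + \<sigma> * x) = density lborel (normal_density \<mu> \<sigma>)"
    using \<open>\<sigma> > 0\<close> by (simp add: distributed_def)
  then show ?thesis
    using \<open>\<sigma> > 0\<close> by (simp add: gaussian_def distr_cong[OF refl sets_lborel[symmetric]])
qed

lemma
  shows integrable_abs_std_gaussian: "integrable (gaussian 0 1) abs"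
    and integral_abs_std_gaussian: "(\<integral>x. \<bar>x\<bar> \<partial>gaussian 0 1) = sqrt (2 / pi)"
proof -
  show "integrable (gaussian 0 1) abs"
    using integrable_std_normal_moment_abs[of 1] by (simp add: gaussian_def integrable_density)
  have "(\<integral>x. \<bar>x\<bar> \<partial>gaussian 0 1) = (\<integral>x. std_normal_density x * \<bar>x\<bar> ^ (2 * 0 + 1) \<partial>lborel)"
    by (simp add: gaussian_def integral_density)
  then show "(\<integral>x. \<bar>x\<bar> \<partial>gaussian 0 1) = sqrt (2 / pi)"
    by (simp only: integral_std_normal_moment_abs_odd) simp
qed

lemma integral_Max_indep_gaussian:
  fixes X :: "'i \<Rightarrow> 'a \<Rightarrow> real"
  assumes "prob_space M" "prob_space.indep_vars M (\<lambda>_. borel) X I" "finite I" "I \<noteq> {}"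
    and \<sigma>: "\<And>i. i \<in> I \<Longrightarrow> 0 \<le> \<sigma> i"
    and X: "\<And>i. i \<in> I \<Longrightarrow> distr M borel (X i) = gaussian (\<mu> i) (\<sigma> i)"
  shows "(\<integral>\<omega>. Max ((\<lambda>i. X i \<omega>) ` I) \<partial>M) =
         (\<integral>z. Max ((\<lambda>i. \<mu> i + \<sigma> i * z i) ` I) \<partial>PiM I (\<lambda>_. gaussian 0 1))"
proof -
  let ?G = "PiM I (\<lambda>_. gaussian 0 1)"
  let ?Z = "\<lambda>i z. \<mu> i + \<sigma> i * z i"
  interpret G: prob_space ?G
    by (intro prob_space_PiM prob_space_gaussian) simp
  have "G.indep_vars (\<lambda>_. gaussian 0 1) (\<lambda>i z. z i) I"
    using indep_vars_PiM_components[OF \<open>I \<noteq> {}\<close>, of "\<lambda>_. gaussian 0 1"]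
    by (simp add: prob_space_gaussian)
  then have Z_indep: "G.indep_vars (\<lambda>_. borel) ?Z I"
    by (rule G.indep_vars_compose2) simp
  have Z_distr: "distr ?G borel (?Z i) = gaussian (\<mu> i) (\<sigma> i)" if "i \<in> I" for i
  proof -
    have [measurable]: "(\<lambda>z. z i) \<in> measurable ?G (gaussian 0 1)"
      using that by measurable
    have "distr ?G borel (?Z i) = distr (distr ?G (gaussian 0 1) (\<lambda>z. z i)) borel (\<lambda>x. \<mu> i + \<sigma> i * x)"
      by (subst distr_distr) (auto simp: comp_def)
    also have "\<dots> = gaussian (\<mu> i) (\<sigma> i)"
      using distr_PiM_component[of I "\<lambda>_. gaussian 0 1" i] distr_std_gaussian_affine[OF \<sigma>] that
      by (simp add: prob_space_gaussian)
    finally show ?thesis .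
  qed
  have Max_meas: "(\<lambda>x. Max (x ` I)) \<in> borel_measurable (PiM I (\<lambda>_. borel :: real measure))"
    using \<open>finite I\<close> by measurable
  have "(\<integral>\<omega>. Max ((\<lambda>i. X i \<omega>) ` I) \<partial>M) = (\<integral>x. Max (x ` I) \<partial>PiM I (\<lambda>i. gaussian (\<mu> i) (\<sigma> i)))"
    using prob_space.integral_indep_vars_PiM[OF assms(1,2,4) Max_meas]
    by (simp add: X cong: PiM_cong)
  also have "\<dots> = (\<integral>z. Max ((\<lambda>i. ?Z i z) ` I) \<partial>?G)"
    using G.integral_indep_vars_PiM[OF Z_indep \<open>I \<noteq> {}\<close> Max_meas]
    by (simp add: Z_distr cong: PiM_cong)
  finally show ?thesis .
qed

lemma
  assumes "i \<in> I"
  shows integrable_abs_component_std_gaussian: "integrable (PiM I (\<lambda>_. gaussian 0 1)) (\<lambda>z. \<bar>z i\<bar>)"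
    and integral_abs_component_std_gaussian: "(\<integral>z. \<bar>z i\<bar> \<partial>PiM I (\<lambda>_. gaussian 0 1)) = sqrt (2 / pi)"
  using integrable_PiM_component_iff[of I "\<lambda>_. gaussian 0 1" i abs]
    integral_PiM_component[of I "\<lambda>_. gaussian 0 1" i abs] assms
  by (simp_all add: prob_space_gaussian integrable_abs_std_gaussian integral_abs_std_gaussian)

lemma integrable_Max_affine_std_gaussian:
  assumes "finite I" "I \<noteq> {}"
  shows "integrable (PiM I (\<lambda>_. gaussian 0 1)) (\<lambda>z. Max ((\<lambda>i. \<mu> i + \<sigma> i * z i) ` I))"
proof (rule Bochner_Integration.integrable_bound)
  let ?G = "PiM I (\<lambda>_. gaussian 0 1)"
  interpret G: prob_space ?G
    by (intro prob_space_PiM prob_space_gaussian) simp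
  show "integrable ?G (\<lambda>z. \<bar>Max (\<mu> ` I)\<bar> + (\<Sum>i\<in>I. \<bar>\<sigma> i\<bar> * \<bar>z i\<bar>))"
    by (intro Bochner_Integration.integrable_add Bochner_Integration.integrable_sum
        integrable_mult_right integrable_abs_component_std_gaussian) auto
  show "(\<lambda>z. Max ((\<lambda>i. \<mu> i + \<sigma> i * z i) ` I)) \<in> borel_measurable ?G"
    using assms(1) by measurable
  show "AE z in ?G. norm (Max ((\<lambda>i. \<mu> i + \<sigma> i * z i) ` I))
                    \<le> norm (\<bar>Max (\<mu> ` I)\<bar> + (\<Sum>i\<in>I. \<bar>\<sigma> i\<bar> * \<bar>z i\<bar>))"
  proof (rule AE_I2)
    fix z :: "'a \<Rightarrow> real"
    have "\<bar>Max ((\<lambda>i. \<mu> i + \<sigma> i * z i) ` I) - Max (\<mu> ` I)\<bar> \<le> (\<Sum>i\<in>I. \<bar>\<sigma> i\<bar> * \<bar>z i\<bar>)"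
      using Max_image_diff_le_sum_abs_diff[OF assms, of "\<lambda>i. \<mu> i + \<sigma> i * z i" \<mu>]
      by (simp add: abs_mult)
    then show "norm (Max ((\<lambda>i. \<mu> i + \<sigma> i * z i) ` I))
               \<le> norm (\<bar>Max (\<mu> ` I)\<bar> + (\<Sum>i\<in>I. \<bar>\<sigma> i\<bar> * \<bar>z i\<bar>))"
      by simp
  qed
qed

lemma integral_Max_affine_std_gaussian_diff_le:
  assumes "finite I" "I \<noteq> {}"
  shows "\<bar>(\<integral>z. Max ((\<lambda>i. \<mu> i + \<sigma> i * z i) ` I) \<partial>PiM I (\<lambda>_. gaussian 0 1)) -
          (\<integral>z. Max ((\<lambda>i. \<mu> i + \<sigma>' i * z i) ` I) \<partial>PiM I (\<lambda>_. gaussian 0 1))\<bar>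
         \<le> sqrt (2 / pi) * (\<Sum>i\<in>I. \<bar>\<sigma> i - \<sigma>' i\<bar>)"
proof -
  let ?G = "PiM I (\<lambda>_. gaussian 0 1)"
  let ?A = "\<lambda>z. Max ((\<lambda>i. \<mu> i + \<sigma> i * z i) ` I)"
  let ?B = "\<lambda>z. Max ((\<lambda>i. \<mu> i + \<sigma>' i * z i) ` I)"
  have A: "integrable ?G ?A" and B: "integrable ?G ?B"
    using assms by (rule integrable_Max_affine_std_gaussian)+
  have bound: "integrable ?G (\<lambda>z. \<Sum>i\<in>I. \<bar>\<sigma> i - \<sigma>' i\<bar> * \<bar>z i\<bar>)"
    by (intro Bochner_Integration.integrable_sum integrable_mult_right integrable_abs_component_std_gaussian)
  have "\<bar>integral\<^sup>L ?G ?A - integral\<^sup>L ?G ?B\<bar> = \<bar>\<integral>z. ?A z - ?B z \<partial>?G\<bar>"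
    using A B by simp
  also have "\<dots> \<le> (\<integral>z. \<bar>?A z - ?B z\<bar> \<partial>?G)"
    using integral_norm_bound[of ?G "\<lambda>z. ?A z - ?B z"] by simp
  also have "\<dots> \<le> (\<integral>z. (\<Sum>i\<in>I. \<bar>\<sigma> i - \<sigma>' i\<bar> * \<bar>z i\<bar>) \<partial>?G)"
  proof (rule integral_mono[OF _ bound])
    show "integrable ?G (\<lambda>z. \<bar>?A z - ?B z\<bar>)"
      using A B by simp
    show "\<bar>?A z - ?B z\<bar> \<le> (\<Sum>i\<in>I. \<bar>\<sigma> i - \<sigma>' i\<bar> * \<bar>z i\<bar>)" for z
      using Max_image_diff_le_sum_abs_diff[OF assms, of "\<lambda>i. \<mu> i + \<sigma> i * z i" "\<lambda>i. \<mu> i + \<sigma>' i * z i"]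
      by (simp add: abs_mult[symmetric] left_diff_distrib)
  qed
  also have "\<dots> = sqrt (2 / pi) * (\<Sum>i\<in>I. \<bar>\<sigma> i - \<sigma>' i\<bar>)"
    by (simp add: Bochner_Integration.integral_sum integrable_abs_component_std_gaussian
        integral_abs_component_std_gaussian sum_distrib_left mult.commute)
  finally show ?thesis .
qed

theorem lemma2:
  shows "\<exists>C::real. \<forall>(n::nat) (\<mu>::nat \<Rightarrow> real) (\<sigma>::nat \<Rightarrow> real) (\<sigma>'::nat \<Rightarrow> real)
            (M::'a measure) (X::nat \<Rightarrow> 'a \<Rightarrow> real) (N::'b measure) (Y::nat \<Rightarrow> 'b \<Rightarrow> real).
     n \<ge> 1 \<and> (\<forall>i<n. 0 \<le> \<sigma> i \<and> 0 \<le> \<sigma>' i) \<and>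
     prob_space M \<and> prob_space.indep_vars M (\<lambda>_. borel) X {..<n} \<and>
     (\<forall>i<n. distr M borel (X i) = gaussian (\<mu> i) (\<sigma> i)) \<and>
     prob_space N \<and> prob_space.indep_vars N (\<lambda>_. borel) Y {..<n} \<and>
     (\<forall>i<n. distr N borel (Y i) = gaussian (\<mu> i) (\<sigma>' i))
     \<longrightarrow> \<bar>(\<integral>\<omega>. Max ((\<lambda>i. X i \<omega>) ` {..<n}) \<partial>M) - (\<integral>\<omega>. Max ((\<lambda>i. Y i \<omega>) ` {..<n}) \<partial>N)\<bar>
         \<le> C * (\<Sum>i<n. \<bar>\<sigma> i - \<sigma>' i\<bar>)"
proof (intro exI[of _ "sqrt (2 / pi)"] allI impI, elim conjE)
  fix n :: nat and \<mu> \<sigma> \<sigma>' :: "nat \<Rightarrow> real"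
    and M :: "'a measure" and X :: "nat \<Rightarrow> 'a \<Rightarrow> real" and N :: "'b measure" and Y :: "nat \<Rightarrow> 'b \<Rightarrow> real"
  assume "n \<ge> 1" and \<sigma>: "\<forall>i<n. 0 \<le> \<sigma> i \<and> 0 \<le> \<sigma>' i"
    and X: "prob_space M" "prob_space.indep_vars M (\<lambda>_. borel) X {..<n}"
      "\<forall>i<n. distr M borel (X i) = gaussian (\<mu> i) (\<sigma> i)"
    and Y: "prob_space N" "prob_space.indep_vars N (\<lambda>_. borel) Y {..<n}"
      "\<forall>i<n. distr N borel (Y i) = gaussian (\<mu> i) (\<sigma>' i)"
  have I: "finite {..<n}" "{..<n} \<noteq> {}"
    using \<open>n \<ge> 1\<close> by (auto simp: lessThan_empty_iff)
  show "\<bar>(\<integral>\<omega>. Max ((\<lambda>i. X i \<omega>) ` {..<n}) \<partial>M) - (\<integral>\<omega>. Max ((\<lambda>i. Y i \<omega>) ` {..<n}) \<partial>N)\<bar>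
        \<le> sqrt (2 / pi) * (\<Sum>i<n. \<bar>\<sigma> i - \<sigma>' i\<bar>)"
    using integral_Max_indep_gaussian[OF X(1,2) I, of \<sigma> \<mu>]
      integral_Max_indep_gaussian[OF Y(1,2) I, of \<sigma>' \<mu>]
      integral_Max_affine_std_gaussian_diff_le[OF I, of \<mu> \<sigma> \<sigma>'] \<sigma> X(3) Y(3)
    by simp
qed

end
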